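(* Consider the following power-of-two-choices balls-into-bins process with resizing. Let $M_0$ be a positive integer (the initial number of bins), and let each ball $x$ have two independent uniformly random hash values $H_1(x), H_2(x)$ (independent across balls) from a range that is a multiple of every number of bins that occurs. When the current number of bins is $m$, ball $x$'s two candidate bins are $h_1(x,m) = H_1(x) \bmod m$ and $h_2(x,m) = H_2(x) \bmod m$. Start with $M_0$ empty bins and perform $N \le \mathrm{poly}(M_0)$ ball insertions; each inserted ball $x$ is placed in whichever of its two candidate bins $h_1(x,m), h_2(x,m)$ currently contains fewer balls. Whenever the current number $n$ of balls in the system surpasses $m/4$, where $m$ is the current number of bins, the number of bins is doubled to $2m$: each bin $i$ splits into bins $i$ and $m+i$, and each ball stored in bin $i$ as its candidate bin $h_k(x,m)=i$ is moved to bin $h_k(x,2m) \in \{i, m+i\}$. Then at any given moment, the number of balls in the fullest bin is $O(\log\log N)$ with probability $1 - 1/\mathrm{poly}(N)$.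
   Context: $\mathrm{poly}(\cdot)$ denotes a polynomial; "with probability $1-1/\mathrm{poly}(N)$" means for any desired constant exponent, with a suitable constant in the $O(\cdot)$. *)

theory Defs
  imports "HOL-Probability.Probability"
begin

text \<open>Balls are 0,1,2,...; ball x is the (x+1)-st inserted ball.
  A hash assignment H maps ball x to the pair (H1 x, H2 x).\<close>

text \<open>Resizing: while the number n of balls exceeds m/4 (i.e. 4n > m), double m.\<close>
definition resize :: "nat \<Rightarrow> nat \<Rightarrow> nat" where
  "resize n m = m * 2 ^ (LEAST j. 4 * n \<le> m * 2 ^ j)"

fun bins :: "nat \<Rightarrow> nat \<Rightarrow> nat" where
  "bins M0 0 = M0"
| "bins M0 (Suc t) = resize (Suc t) (bins M0 t)"

text \<open>Bin of ball x when there are m bins, given choice vector c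
  (c x = True: ball x is stored via its first hash, False: via its second).
  Moving ball x on a split from bin h_k(x,m) to h_k(x,2m) keeps this formula valid.\<close>
definition pos :: "(nat \<Rightarrow> nat \<times> nat) \<Rightarrow> (nat \<Rightarrow> bool) \<Rightarrow> nat \<Rightarrow> nat \<Rightarrow> nat" where
  "pos H c x m = (if c x then fst (H x) else snd (H x)) mod m"

definition load :: "(nat \<Rightarrow> nat \<times> nat) \<Rightarrow> (nat \<Rightarrow> bool) \<Rightarrow> nat \<Rightarrow> nat \<Rightarrow> nat \<Rightarrow> nat" where
  "load H c t m i = card {x. x < t \<and> pos H c x m = i}"

text \<open>Ball t goes to the less loaded of its two
  candidate bins h1(t,m), h2(t,m) (m = bins before its insertion); ties are broken by
  an arbitrary fixed rule tb (tb t = True: first candidate).\<close>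
fun choice :: "nat \<Rightarrow> (nat \<Rightarrow> bool) \<Rightarrow> (nat \<Rightarrow> nat \<times> nat) \<Rightarrow> nat \<Rightarrow> (nat \<Rightarrow> bool)" where
  "choice M0 tb H 0 = (\<lambda>x. True)"
| "choice M0 tb H (Suc t) =
     (let c = choice M0 tb H t; m = bins M0 t;
          l1 = load H c t m (fst (H t) mod m);
          l2 = load H c t m (snd (H t) mod m)
      in c(t := (l1 < l2 \<or> (l1 = l2 \<and> tb t))))"

definition max_load :: "nat \<Rightarrow> (nat \<Rightarrow> bool) \<Rightarrow> (nat \<Rightarrow> nat \<times> nat) \<Rightarrow> nat \<Rightarrow> nat" where
  "max_load M0 tb H t =
     Max ((\<lambda>i. load H (choice M0 tb H t) t (bins M0 t) i) ` {..<bins M0 t})"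

definition hash_pmf :: "nat \<Rightarrow> nat \<Rightarrow> (nat \<Rightarrow> nat \<times> nat) pmf" where
  "hash_pmf N D = Pi_pmf {..<N} (0, 0) (\<lambda>_. pmf_of_set ({..<D} \<times> {..<D}))"

end

theory Submission
  imports Defs "HOL-Real_Asymp.Real_Asymp"
begin

text \<open>Layered induction in the style of Azar, Broder, Karlin and Upfal. The number of bins only
  doubles, so a bin at time \<open>t\<close> lies inside a single bin of any earlier time. Hence a bin
  holding \<open>k + 1\<close> balls contains a ball that was placed at height at least \<open>k\<close> (the last one),
  and there are at most as many bins of load above \<open>k\<close> as balls of height at least \<open>k\<close>.
  A new ball reaches height \<open>k + 1\<close> only if both of its candidate bins are such bins, which,
  given the past, has probability at most the square of their fraction. A Chernoff bound for
  these adapted events shows that, level by level and with polynomially small failure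
  probability, the number of balls of height at least \<open>k\<close> stays below \<open>beta k = (1/4) ^ (2 ^ k)\<close>
  times the number of bins, or below a floor of order \<open>log N\<close>. After \<open>k0 \<approx> log log N\<close> levels
  \<open>beta k0 \<le> 1/N\<close>, and then only a constant number of balls climbs further.\<close>

section \<open>Number of bins\<close>

lemma four_mul_le_resize:
  assumes "0 < m"
  shows "4 * n \<le> resize n m"
proof -
  have "4 * n < 2 ^ (4 * n)"
    by (rule less_exp)
  also have "\<dots> \<le> m * 2 ^ (4 * n)"
    using assms by simp
  finally have "4 * n \<le> m * 2 ^ (4 * n)"
    by simp
  then show ?thesis
    unfolding resize_def by (rule LeastI)
qed

lemma dvd_resize: "m dvd resize n m"
  unfolding resize_def by simp

lemma le_resize: "0 < m \<Longrightarrow> m \<le> resize n m"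
  unfolding resize_def by simp

lemma bins_pos: "0 < M0 \<Longrightarrow> 0 < bins M0 s"
  by (induction s) (auto simp: resize_def)

lemma four_mul_le_bins: "4 * s \<le> bins M0 s" if "0 < M0"
proof (cases s)
  case (Suc n)
  then show ?thesis
    using four_mul_le_resize[OF bins_pos[OF that, of n], of "Suc n"] by simp
qed simp

lemma max_le_bins:
  assumes "0 < M0"
  shows "max M0 s \<le> bins M0 s"
proof -
  have "M0 \<le> bins M0 s"
    by (induction s) (auto intro: order_trans[OF _ le_resize] bins_pos[OF assms])
  then show ?thesis
    using four_mul_le_bins[OF assms, of s] by simp
qed

lemma bins_dvd_bins: "s \<le> s' \<Longrightarrow> bins M0 s dvd bins M0 s'"
proof (induction s' rule: dec_induct)
  case (step n)
  then show ?case
    using dvd_trans[OF _ dvd_resize] by auto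
qed simp

section \<open>Heights of balls\<close>

lemma load_cong:
  "(\<And>z. z < t \<Longrightarrow> c z = c' z) \<Longrightarrow> (\<And>z. z < t \<Longrightarrow> H z = H' z) \<Longrightarrow>
    load H c t m i = load H' c' t m i"
  unfolding load_def pos_def by (rule arg_cong[where f = card]) auto

lemma choice_eq_choice_Suc: "y < t \<Longrightarrow> choice M0 tb H t y = choice M0 tb H (Suc y) y"
proof (induction t)
  case (Suc t)
  then show ?case
    by (cases "y = t") (auto simp: Let_def)
qed simp

lemma choice_cong: "(\<And>z. z < t \<Longrightarrow> H z = H' z) \<Longrightarrow> choice M0 tb H t = choice M0 tb H' t"
proof (induction t)
  case (Suc t)
  have IH: "choice M0 tb H t = choice M0 tb H' t"
    using Suc by auto
  have "load H (choice M0 tb H' t) t (bins M0 t) i = load H' (choice M0 tb H' t) t (bins M0 t) i"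
    for i using Suc.prems by (intro load_cong) auto
  then show ?case
    using Suc.prems by (simp add: Let_def IH)
qed simp

definition ball_height :: "nat \<Rightarrow> (nat \<Rightarrow> bool) \<Rightarrow> (nat \<Rightarrow> nat \<times> nat) \<Rightarrow> nat \<Rightarrow> nat" where
  "ball_height M0 tb H x =
     min (load H (choice M0 tb H x) x (bins M0 x) (fst (H x) mod bins M0 x))
         (load H (choice M0 tb H x) x (bins M0 x) (snd (H x) mod bins M0 x))"

lemma load_chosen_bin_eq_ball_height:
  "load H (choice M0 tb H x) x (bins M0 x) (pos H (choice M0 tb H (Suc x)) x (bins M0 x)) =
    ball_height M0 tb H x"
  unfolding ball_height_def pos_def by (auto simp: Let_def)

lemma ball_height_fun_upd:
  "ball_height M0 tb (H(x := v)) x =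
    min (load H (choice M0 tb H x) x (bins M0 x) (fst v mod bins M0 x))
        (load H (choice M0 tb H x) x (bins M0 x) (snd v mod bins M0 x))"
proof -
  have "choice M0 tb (H(x := v)) x = choice M0 tb H x"
    by (rule choice_cong) auto
  moreover have "load (H(x := v)) (choice M0 tb H x) x m i = load H (choice M0 tb H x) x m i" for m i
    by (rule load_cong) auto
  ultimately show ?thesis
    unfolding ball_height_def by simp
qed

lemma ball_height_cong: "(\<And>y. y \<le> x \<Longrightarrow> H y = H' y) \<Longrightarrow> ball_height M0 tb H x = ball_height M0 tb H' x"
proof -
  assume H: "\<And>y. y \<le> x \<Longrightarrow> H y = H' y"
  have "choice M0 tb H x = choice M0 tb H' x"
    using H by (intro choice_cong) auto
  moreover have "load H (choice M0 tb H' x) x m i = load H' (choice M0 tb H' x) x m i" for m i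
    using H by (intro load_cong) auto
  ultimately show ?thesis
    unfolding ball_height_def using H[of x] by simp
qed

text \<open>Since \<open>m\<close> is a multiple of all earlier numbers of bins, bin \<open>i\<close> lies inside
  the bin in which its last ball \<open>y\<close> was placed, at the time of that placement.\<close>

lemma high_ball_in_loaded_bin:
  assumes multiple: "\<And>y. y < t \<Longrightarrow> bins M0 y dvd m"
    and load: "Suc k \<le> load H (choice M0 tb H t) t m i"
  shows "\<exists>y<t. pos H (choice M0 tb H t) y m = i \<and> k \<le> ball_height M0 tb H y"
proof -
  define c where "c = choice M0 tb H t"
  define S where "S = {x. x < t \<and> pos H c x m = i}"
  have fin: "finite S"
    unfolding S_def by auto
  have card_S: "Suc k \<le> card S"
    using load unfolding S_def c_def load_def .
  define y where "y = Max S"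
  have "y \<in> S"
    unfolding y_def using fin card_S by (intro Max_in) auto
  then have yt: "y < t" and pos_y: "pos H c y m = i"
    unfolding S_def by auto
  have pos_mod: "pos H (choice M0 tb H y') x (bins M0 y) = pos H c x m mod bins M0 y"
    if "x < y'" "y' \<le> t" for x y'
    using choice_eq_choice_Suc[of x y'] choice_eq_choice_Suc[of x t] that yt
    by (auto simp: pos_def c_def mod_mod_cancel[OF multiple[OF yt]])
  have "S - {y} \<subseteq>
      {x. x < y \<and> pos H (choice M0 tb H y) x (bins M0 y) =
                  pos H (choice M0 tb H (Suc y)) y (bins M0 y)}"
  proof
    fix x assume x: "x \<in> S - {y}"
    then have "x < y"
      unfolding y_def using Max_ge[OF fin, of x] by auto
    with x show "x \<in> {x. x < y \<and> pos H (choice M0 tb H y) x (bins M0 y) =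
                  pos H (choice M0 tb H (Suc y)) y (bins M0 y)}"
      using pos_mod[of x y] pos_mod[of y "Suc y"] yt pos_y unfolding S_def by auto
  qed
  then have "card (S - {y}) \<le> ball_height M0 tb H y"
    unfolding load_chosen_bin_eq_ball_height[symmetric] load_def by (intro card_mono) auto
  moreover have "card (S - {y}) = card S - 1"
    using \<open>y \<in> S\<close> fin by simp
  ultimately show ?thesis
    using card_S yt pos_y c_def by auto
qed

definition num_height_ge :: "nat \<Rightarrow> (nat \<Rightarrow> bool) \<Rightarrow> (nat \<Rightarrow> nat \<times> nat) \<Rightarrow> nat \<Rightarrow> nat \<Rightarrow> nat"
  where "num_height_ge M0 tb H k s = card {x. x < s \<and> k \<le> ball_height M0 tb H x}"

lemma num_height_ge_cong:
  "(\<And>y. y < x \<Longrightarrow> H y = H' y) \<Longrightarrow> num_height_ge M0 tb H k x = num_height_ge M0 tb H' k x"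
  unfolding num_height_ge_def
  by (rule arg_cong[where f = card], rule Collect_cong) (metis ball_height_cong order_le_less_trans)

lemma card_loaded_bins_le:
  assumes multiple: "\<And>y. y < t \<Longrightarrow> bins M0 y dvd m"
  shows "card {i. i < m \<and> Suc k \<le> load H (choice M0 tb H t) t m i} \<le> num_height_ge M0 tb H k t"
proof -
  let ?B = "{i. i < m \<and> Suc k \<le> load H (choice M0 tb H t) t m i}"
  define f where
    "f i = (SOME y. y < t \<and> pos H (choice M0 tb H t) y m = i \<and> k \<le> ball_height M0 tb H y)" for i
  have f: "f i < t \<and> pos H (choice M0 tb H t) (f i) m = i \<and> k \<le> ball_height M0 tb H (f i)"
    if "i \<in> ?B" for i
  proof -
    have "\<exists>y. y < t \<and> pos H (choice M0 tb H t) y m = i \<and> k \<le> ball_height M0 tb H y"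
      using high_ball_in_loaded_bin[OF multiple] that by auto
    then show ?thesis
      unfolding f_def by (rule someI_ex)
  qed
  have "inj_on f ?B"
    by (rule inj_onI) (metis f)
  moreover have "f ` ?B \<subseteq> {x. x < t \<and> k \<le> ball_height M0 tb H x}"
    using f by auto
  ultimately show ?thesis
    unfolding num_height_ge_def by (intro card_inj_on_le) auto
qed

lemma le_num_height_ge_if_ball_height:
  "y < t \<Longrightarrow> k + j \<le> ball_height M0 tb H y \<Longrightarrow> j \<le> num_height_ge M0 tb H (Suc k) t"
proof (induction j arbitrary: y t)
  case (Suc j)
  have "Suc (k + j) \<le> load H (choice M0 tb H y) y (bins M0 y) (fst (H y) mod bins M0 y)"
    using Suc.prems(2) unfolding ball_height_def by simp
  then obtain z where z: "z < y" "k + j \<le> ball_height M0 tb H z"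
    using high_ball_in_loaded_bin[of y] bins_dvd_bins by (meson less_imp_le)
  have "card (insert y {x. x < y \<and> Suc k \<le> ball_height M0 tb H x}) \<le>
      card {x. x < t \<and> Suc k \<le> ball_height M0 tb H x}"
    using Suc.prems by (intro card_mono) auto
  then have "Suc (num_height_ge M0 tb H (Suc k) y) \<le> num_height_ge M0 tb H (Suc k) t"
    unfolding num_height_ge_def by simp
  then show ?case
    using Suc.IH[OF z] by simp
qed simp

lemma max_load_witness:
  assumes M0: "0 < M0" and K: "K < max_load M0 tb H t"
  shows "\<exists>y<t. K \<le> ball_height M0 tb H y"
proof -
  let ?m = "bins M0 t"
  let ?L = "(\<lambda>i. load H (choice M0 tb H t) t ?m i) ` {..<?m}"
  have "Max ?L \<in> ?L"
    using bins_pos[OF M0, of t] by (intro Max_in) auto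
  then obtain i where "load H (choice M0 tb H t) t ?m i = max_load M0 tb H t"
    unfolding max_load_def by auto
  then have "Suc K \<le> load H (choice M0 tb H t) t ?m i"
    using K by simp
  then show ?thesis
    using high_ball_in_loaded_bin[of t] bins_dvd_bins by (meson less_imp_le)
qed

section \<open>A Chernoff bound for adapted events\<close>

lemma nn_integral_Pi_pmf_prod_adapted_le:
  fixes f :: "nat \<Rightarrow> (nat \<Rightarrow> 'b) \<Rightarrow> ennreal" and g :: "nat \<Rightarrow> ennreal"
  assumes adapted: "\<And>x H H'. x < n \<Longrightarrow> (\<And>y. y \<le> x \<Longrightarrow> H y = H' y) \<Longrightarrow> f x H = f x H'"
    and step: "\<And>x H. x < n \<Longrightarrow> (\<integral>\<^sup>+v. f x (H(x := v)) \<partial>measure_pmf U) \<le> g x"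
  shows "(\<integral>\<^sup>+H. (\<Prod>x<n. f x H) \<partial>measure_pmf (Pi_pmf {..<n} d (\<lambda>_. U))) \<le> (\<Prod>x<n. g x)"
  using adapted step
proof (induction n)
  case (Suc n)
  let ?P = "Pi_pmf {..<n} d (\<lambda>_. U)"
  have Pi_Suc: "Pi_pmf {..<Suc n} d (\<lambda>_. U) = map_pmf (\<lambda>(y, f). f(n := y)) (pair_pmf U ?P)"
    unfolding lessThan_Suc by (rule Pi_pmf_insert) auto
  have past: "f x (H(n := y)) = f x H" if "x < n" for x H y
    by (rule Suc.prems(1)) (use that in auto)
  have "(\<integral>\<^sup>+H. (\<Prod>x<Suc n. f x H) \<partial>measure_pmf (Pi_pmf {..<Suc n} d (\<lambda>_. U)))
      = (\<integral>\<^sup>+z. (\<Prod>x<Suc n. f x ((fst z)(n := snd z))) \<partial>measure_pmf (pair_pmf ?P U))"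
    unfolding Pi_Suc by (subst pair_commute_pmf) (simp add: case_prod_beta)
  also have "\<dots> = (\<integral>\<^sup>+H. (\<Prod>x<n. f x H) * (\<integral>\<^sup>+y. f n (H(n := y)) \<partial>U) \<partial>?P)"
    by (simp add: nn_integral_pair_pmf' past nn_integral_cmult)
  also have "\<dots> \<le> (\<integral>\<^sup>+H. (\<Prod>x<n. f x H) * g n \<partial>?P)"
    by (intro nn_integral_mono mult_left_mono Suc.prems(2)) auto
  also have "\<dots> = (\<integral>\<^sup>+H. (\<Prod>x<n. f x H) \<partial>?P) * g n"
    by (simp add: nn_integral_multc)
  also have "\<dots> \<le> (\<Prod>x<n. g x) * g n"
  proof (rule mult_right_mono)
    show "(\<integral>\<^sup>+H. (\<Prod>x<n. f x H) \<partial>?P) \<le> (\<Prod>x<n. g x)"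
    proof (rule Suc.IH)
      show "f x H = f x H'" if "x < n" "\<And>y. y \<le> x \<Longrightarrow> H y = H' y" for x H H'
        using Suc.prems(1)[of x H H'] that by simp
      show "(\<integral>\<^sup>+v. f x (H(x := v)) \<partial>measure_pmf U) \<le> g x" if "x < n" for x H
        by (rule Suc.prems(2)) (use that in simp)
    qed
  qed simp
  finally show ?case
    by simp
qed simp

lemma nn_integral_if_ennreal_eq:
  assumes "1 \<le> z"
  shows "(\<integral>\<^sup>+v. (if P v then ennreal z else 1) \<partial>measure_pmf U)
    = ennreal (1 + (z - 1) * measure_pmf.prob U {v. P v})"
proof -
  have "(\<integral>\<^sup>+v. (if P v then ennreal z else 1) \<partial>measure_pmf U)
      = (\<integral>\<^sup>+v. 1 + ennreal (z - 1) * indicator {v. P v} v \<partial>measure_pmf U)"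
    using assms ennreal_plus[of 1 "z - 1"] by (intro nn_integral_cong) (auto simp: indicator_def)
  also have "\<dots> = 1 + ennreal (z - 1) * ennreal (measure_pmf.prob U {v. P v})"
    by (simp add: nn_integral_add nn_integral_cmult_indicator measure_pmf.emeasure_space_1
        measure_pmf.emeasure_eq_measure)
  also have "\<dots> = ennreal (1 + (z - 1) * measure_pmf.prob U {v. P v})"
    using assms ennreal_plus[of 1 "(z - 1) * measure_pmf.prob U {v. P v}"]
    by (simp add: ennreal_mult[symmetric])
  finally show ?thesis .
qed

lemma prod_if_ennreal_eq_powr:
  fixes n :: nat
  assumes "0 < z"
  shows "(\<Prod>x<n. if E x then ennreal z else 1) = ennreal (z powr real (card {x. x < n \<and> E x}))"
proof -
  have "(\<Prod>x<n. if E x then ennreal z else 1) = (\<Prod>x\<in>{x. x < n \<and> E x}. ennreal z)"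
    using prod.inter_filter[of "{..<n}" "\<lambda>_. ennreal z" E] by simp
  also have "\<dots> = ennreal (z powr real (card {x. x < n \<and> E x}))"
    using assms by (simp add: ennreal_power powr_realpow)
  finally show ?thesis .
qed

text \<open>Exponential moments: \<open>z\<close> to the number of events that occur is a product of
  factors \<open>z\<close> or \<open>1\<close>, each with conditional expectation at most \<open>1 + (z - 1) p x\<close>.\<close>

lemma prob_Pi_pmf_card_adapted_ge:
  fixes E :: "nat \<Rightarrow> (nat \<Rightarrow> 'b) \<Rightarrow> bool" and p :: "nat \<Rightarrow> real" and z T :: real
  assumes adapted: "\<And>x H H'. x < n \<Longrightarrow> (\<And>y. y \<le> x \<Longrightarrow> H y = H' y) \<Longrightarrow> E x H = E x H'"
    and step: "\<And>x H. x < n \<Longrightarrow> measure_pmf.prob U {v. E x (H(x := v))} \<le> p x"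
    and z: "1 \<le> z"
  shows "measure_pmf.prob (Pi_pmf {..<n} d (\<lambda>_. U)) {H. T \<le> real (card {x. x < n \<and> E x H})}
    \<le> exp ((z - 1) * (\<Sum>x<n. p x)) / z powr T"
proof -
  let ?P = "Pi_pmf {..<n} d (\<lambda>_. U)"
  let ?f = "\<lambda>x H. if E x H then ennreal z else 1"
  define A where "A = {H. T \<le> real (card {x. x < n \<and> E x H})}"
  have p_nonneg: "0 \<le> p x" if "x < n" for x
    using step[OF that, of undefined] measure_nonneg order_trans by blast
  have "(\<integral>\<^sup>+H. (\<Prod>x<n. ?f x H) \<partial>measure_pmf ?P) \<le> (\<Prod>x<n. ennreal (1 + (z - 1) * p x))"
  proof (rule nn_integral_Pi_pmf_prod_adapted_le)
    show "?f x H = ?f x H'" if "x < n" "\<And>y. y \<le> x \<Longrightarrow> H y = H' y" for x H H'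
      using adapted[OF that] by simp
    show "(\<integral>\<^sup>+v. ?f x (H(x := v)) \<partial>measure_pmf U) \<le> ennreal (1 + (z - 1) * p x)"
      if "x < n" for x H
      unfolding nn_integral_if_ennreal_eq[OF z]
      using z step[OF that, of H] by (intro ennreal_leI add_left_mono mult_left_mono) auto
  qed
  also have "\<dots> = ennreal (\<Prod>x<n. 1 + (z - 1) * p x)"
    using z p_nonneg by (subst prod_ennreal) auto
  also have "\<dots> \<le> ennreal (exp ((z - 1) * (\<Sum>x<n. p x)))"
    using z p_nonneg prod_le_exp_sum[of "{..<n}" "\<lambda>x. (z - 1) * p x"]
    by (intro ennreal_leI) (auto simp: sum_distrib_left)
  finally have moment: "(\<integral>\<^sup>+H. (\<Prod>x<n. ?f x H) \<partial>measure_pmf ?P) \<le> ennreal (exp ((z - 1) * (\<Sum>x<n. p x)))" .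
  have markov: "ennreal (z powr T) * indicator A H \<le> (\<Prod>x<n. ?f x H)" for H
  proof (cases "H \<in> A")
    case True
    then show ?thesis
      using z unfolding prod_if_ennreal_eq_powr[OF order.strict_trans2[OF zero_less_one z]] A_def
      by (simp add: ennreal_leI powr_mono)
  qed simp
  have "ennreal (z powr T) * emeasure ?P A = (\<integral>\<^sup>+H. ennreal (z powr T) * indicator A H \<partial>measure_pmf ?P)"
    by (simp add: nn_integral_cmult_indicator)
  also have "\<dots> \<le> ennreal (exp ((z - 1) * (\<Sum>x<n. p x)))"
    using nn_integral_mono[OF markov] moment by (rule order_trans)
  finally have "ennreal (z powr T * measure_pmf.prob ?P A) \<le> ennreal (exp ((z - 1) * (\<Sum>x<n. p x)))"
    by (simp add: measure_pmf.emeasure_eq_measure ennreal_mult)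
  then have "z powr T * measure_pmf.prob ?P A \<le> exp ((z - 1) * (\<Sum>x<n. p x))"
    by simp
  then show ?thesis
    unfolding A_def[symmetric] using z by (simp add: field_simps)
qed

section \<open>Probability that a ball lands high\<close>

lemma card_mod_in_le:
  fixes A :: "nat set"
  assumes "0 < m" "m dvd D" "A \<subseteq> {..<m}"
  shows "card {y. y < D \<and> y mod m \<in> A} \<le> card A * (D div m)"
proof -
  have "card {y. y < D \<and> y mod m \<in> A} \<le> card ({..<D div m} \<times> A)"
  proof (rule card_inj_on_le)
    show "inj_on (\<lambda>y. (y div m, y mod m)) {y. y < D \<and> y mod m \<in> A}"
      by (rule inj_onI) (metis div_mult_mod_eq prod.inject)
    show "(\<lambda>y. (y div m, y mod m)) ` {y. y < D \<and> y mod m \<in> A} \<subseteq> {..<D div m} \<times> A"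
      using assms by (auto simp: less_mult_imp_div_less)
    show "finite ({..<D div m} \<times> A)"
      using assms finite_subset by blast
  qed
  then show ?thesis
    by (simp add: card_cartesian_product mult.commute)
qed

lemma prob_both_mod_in_le:
  fixes A :: "nat set"
  assumes "0 < m" "m dvd D" "A \<subseteq> {..<m}" and D: "0 < D"
  shows "measure_pmf.prob (pmf_of_set ({..<D} \<times> {..<D})) {v. fst v mod m \<in> A \<and> snd v mod m \<in> A}
    \<le> (real (card A) / real m)^2"
proof -
  let ?S = "{y. y < D \<and> y mod m \<in> A}"
  have "real (card ?S) \<le> real (card A * (D div m))"
    using card_mod_in_le[OF assms(1-3)] by (simp only: of_nat_le_iff)
  also have "\<dots> = real (card A) * (real D / real m)"
    using assms(1,2) by (simp add: real_of_nat_div)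
  finally have card_S: "real (card ?S) \<le> real (card A) * (real D / real m)" .
  have "({..<D} \<times> {..<D}) \<inter> {v. fst v mod m \<in> A \<and> snd v mod m \<in> A} = ?S \<times> ?S"
    by auto
  then have "measure_pmf.prob (pmf_of_set ({..<D} \<times> {..<D})) {v. fst v mod m \<in> A \<and> snd v mod m \<in> A}
      = real (card ?S) ^ 2 / real D ^ 2"
    using D by (subst measure_pmf_of_set) (auto simp: card_cartesian_product power2_eq_square)
  also have "\<dots> \<le> (real (card A) * (real D / real m)) ^ 2 / real D ^ 2"
    using card_S by (intro divide_right_mono power_mono) auto
  also have "\<dots> = (real (card A) / real m)^2"
    using D by (simp add: field_simps)
  finally show ?thesis .
qed

definition climbs :: "nat \<Rightarrow> (nat \<Rightarrow> bool) \<Rightarrow> (nat \<Rightarrow> real) \<Rightarrow> nat \<Rightarrow> nat \<Rightarrow> (nat \<Rightarrow> nat \<times> nat) \<Rightarrow> bool"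
  where "climbs M0 tb \<tau> k x H \<longleftrightarrow>
    Suc k \<le> ball_height M0 tb H x \<and> real (num_height_ge M0 tb H k x) \<le> \<tau> x"

lemma climbs_cong: "(\<And>y. y \<le> x \<Longrightarrow> H y = H' y) \<Longrightarrow> climbs M0 tb \<tau> k x H = climbs M0 tb \<tau> k x H'"
  unfolding climbs_def using ball_height_cong[of x H H'] num_height_ge_cong[of x H H'] by auto

lemma prob_climbs_le:
  assumes M0: "0 < M0" and D: "0 < D" "bins M0 x dvd D"
  shows "measure_pmf.prob (pmf_of_set ({..<D} \<times> {..<D})) {v. climbs M0 tb \<tau> k x (H(x := v))}
    \<le> (\<tau> x / real (bins M0 x))^2"
proof (cases "real (num_height_ge M0 tb H k x) \<le> \<tau> x")
  case False
  have "num_height_ge M0 tb (H(x := v)) k x = num_height_ge M0 tb H k x" for v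
    by (rule num_height_ge_cong) auto
  then have "{v. climbs M0 tb \<tau> k x (H(x := v))} = {}"
    using False unfolding climbs_def by auto
  then show ?thesis
    by (simp only:) simp
next
  case True
  let ?m = "bins M0 x"
  let ?c = "choice M0 tb H x"
  define A where "A = {i. i < ?m \<and> Suc k \<le> load H ?c x ?m i}"
  have m: "0 < ?m"
    using bins_pos[OF M0] .
  have "card A \<le> num_height_ge M0 tb H k x"
    unfolding A_def by (rule card_loaded_bins_le) (auto intro: bins_dvd_bins)
  then have card_A: "real (card A) \<le> \<tau> x"
    using True by linarith
  have "{v. climbs M0 tb \<tau> k x (H(x := v))} \<subseteq> {v. fst v mod ?m \<in> A \<and> snd v mod ?m \<in> A}"
    unfolding A_def climbs_def ball_height_fun_upd using m by auto
  then have "measure_pmf.prob (pmf_of_set ({..<D} \<times> {..<D})) {v. climbs M0 tb \<tau> k x (H(x := v))}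
      \<le> measure_pmf.prob (pmf_of_set ({..<D} \<times> {..<D})) {v. fst v mod ?m \<in> A \<and> snd v mod ?m \<in> A}"
    by (rule measure_pmf.finite_measure_mono) auto
  also have "\<dots> \<le> (real (card A) / real ?m)^2"
    by (rule prob_both_mod_in_le[OF m D(2) _ D(1)]) (auto simp: A_def)
  also have "\<dots> \<le> (\<tau> x / real ?m)^2"
    using card_A m by (intro power_mono divide_right_mono) auto
  finally show ?thesis .
qed

section \<open>Layered induction\<close>

text \<open>\<open>beta 0 = 1/4\<close> because there are never more balls than a quarter of the bins, and
  squaring reflects that a ball needs both candidate bins to be high. The floor \<open>R\<close> keeps the
  Chernoff bounds strong once \<open>beta k * bins M0 x\<close> becomes small.\<close>

definition beta :: "nat \<Rightarrow> real" where
  "beta k = (1 / 4) ^ (2 ^ k)"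

definition threshold :: "nat \<Rightarrow> real \<Rightarrow> nat \<Rightarrow> nat \<Rightarrow> real" where
  "threshold M0 R k x = max (beta k * real (bins M0 x)) R"

lemma beta_Suc: "beta (Suc k) = (beta k)^2"
  unfolding beta_def by (simp add: power_mult[symmetric] mult.commute)

lemma beta_nonneg: "0 \<le> beta k"
  unfolding beta_def by simp

lemma sum_inverse_square_max_le:
  assumes "1 \<le> M"
  shows "(\<Sum>x<s. 1 / real (max M x)^2) \<le> 3 / real M"
proof -
  have "(\<Sum>x<s. 1 / real (max M x)^2) \<le> real (min s M) / real M^2 + 2 / real M - 2 / real (max M s)"
  proof (induction s)
    case (Suc s)
    show ?case
    proof (cases "Suc s \<le> M")
      case True
      then show ?thesis
        using Suc.IH by (simp add: max_def min_def add_divide_distrib)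
    next
      case False
      then have s: "1 \<le> real s" and minmax: "max M s = s" "max M (Suc s) = Suc s"
          "min s M = M" "min (Suc s) M = M"
        using assms by auto
      have "real s * (real s + 1) \<le> 2 * real s^2"
        using s by (simp add: power2_eq_square algebra_simps)
      then have "2 / (2 * real s^2) \<le> 2 / (real s * (real s + 1))"
        using s by (intro frac_le) auto
      then have "1 / real s^2 \<le> 2 / (real s * (real s + 1))"
        by simp
      also have "\<dots> = 2 / real s - 2 / real (Suc s)"
        using s by (simp add: field_simps)
      finally show ?thesis
        using Suc.IH by (simp add: minmax)
    qed
  qed (use assms in simp)
  moreover have "real (min s M) / real M^2 \<le> 1 / real M"
    using assms by (simp add: field_simps power2_eq_square)
  moreover have "0 \<le> 2 / real (max M s)"
    by simp
  ultimately show ?thesis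
    by linarith
qed

lemma sum_inverse_square_bins_le:
  assumes "0 < M0"
  shows "(\<Sum>x<s. 1 / real (bins M0 x)^2) \<le> 3 / real M0"
proof -
  have "(\<Sum>x<s. 1 / real (bins M0 x)^2) \<le> (\<Sum>x<s. 1 / real (max M0 x)^2)"
    using max_le_bins[OF assms] bins_pos[OF assms] assms
    by (intro sum_mono divide_left_mono power_mono mult_pos_pos) auto
  also have "\<dots> \<le> 3 / real M0"
    using assms by (intro sum_inverse_square_max_le) auto
  finally show ?thesis .
qed

lemma sum_square_threshold_le:
  assumes M0: "0 < M0" and R: "0 \<le> R"
  shows "(\<Sum>x<s. (threshold M0 R k x / real (bins M0 x))^2) \<le> real s * (beta k)^2 + 3 * R^2 / real M0"
proof -
  have "(threshold M0 R k x / real (bins M0 x))^2 \<le> (beta k)^2 + R^2 * (1 / real (bins M0 x)^2)" for x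
    using bins_pos[OF M0, of x] beta_nonneg[of k] R
    by (cases "beta k * real (bins M0 x) \<le> R") (simp_all add: threshold_def power_divide)
  then have "(\<Sum>x<s. (threshold M0 R k x / real (bins M0 x))^2)
      \<le> (\<Sum>x<s. (beta k)^2 + R^2 * (1 / real (bins M0 x)^2))"
    by (rule sum_mono)
  also have "\<dots> = real s * (beta k)^2 + R^2 * (\<Sum>x<s. 1 / real (bins M0 x)^2)"
    by (simp add: sum.distrib sum_distrib_left)
  also have "\<dots> \<le> real s * (beta k)^2 + R^2 * (3 / real M0)"
    by (intro add_left_mono mult_left_mono sum_inverse_square_bins_le M0) auto
  finally show ?thesis
    by (simp add: mult.commute)
qed

lemma sum_square_threshold_le_threshold_Suc:
  assumes M0: "0 < M0" and R: "0 \<le> R" "24 * R \<le> real M0"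
  shows "(\<Sum>x<s. (threshold M0 R k x / real (bins M0 x))^2) \<le> 3 * threshold M0 R (Suc k) s / 8"
proof -
  define T where "T = threshold M0 R (Suc k) s"
  have T: "R \<le> T" "beta (Suc k) * real (bins M0 s) \<le> T"
    unfolding T_def threshold_def by auto
  have "4 * real s * (beta k)^2 \<le> real (bins M0 s) * (beta k)^2"
    using four_mul_le_bins[OF M0, of s] by (intro mult_right_mono) auto
  then have "real s * (beta k)^2 \<le> T / 4"
    using T(2) by (simp add: beta_Suc algebra_simps)
  moreover have "3 * R^2 / real M0 \<le> T / 8"
  proof -
    have "3 * R^2 * 8 \<le> R * real M0"
      using R mult_left_mono[OF R(2) R(1)] by (simp add: power2_eq_square)
    also have "\<dots> \<le> T * real M0"
      using T(1) by (intro mult_right_mono) auto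
    finally show ?thesis
      using M0 by (simp add: field_simps)
  qed
  ultimately show ?thesis
    using sum_square_threshold_le[OF M0 R(1), where s = s and k = k] unfolding T_def by linarith
qed

lemma num_height_ge_le_threshold:
  assumes M0: "0 < M0"
    and no_overflow: "\<And>k s. k < k0 \<Longrightarrow> s < N \<Longrightarrow>
      real (card {x. x < s \<and> climbs M0 tb (threshold M0 R k) k x H}) < threshold M0 R (Suc k) s"
  shows "k \<le> k0 \<Longrightarrow> s < N \<Longrightarrow> real (num_height_ge M0 tb H k s) \<le> threshold M0 R k s"
proof (induction k arbitrary: s)
  case 0
  have "real s \<le> beta 0 * real (bins M0 s)"
    using four_mul_le_bins[OF M0, of s] unfolding beta_def by simp
  then show ?case
    unfolding num_height_ge_def threshold_def by simp
next
  case (Suc k)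
  have "real (num_height_ge M0 tb H k x) \<le> threshold M0 R k x" if "x < s" for x
    using Suc that by auto
  then have "{x. x < s \<and> Suc k \<le> ball_height M0 tb H x} =
      {x. x < s \<and> climbs M0 tb (threshold M0 R k) k x H}"
    unfolding climbs_def by auto
  then show ?case
    unfolding num_height_ge_def using no_overflow[of k s] Suc.prems by simp
qed

lemma exp_div_two_powr_le:
  fixes S T :: real
  assumes "0 \<le> T" "S \<le> 3 * T / 8"
  shows "exp S / 2 powr T \<le> exp (- T / 8)"
proof -
  have "T * (1 / 2) \<le> T * ln 2"
    using assms(1) ln2_ge_two_thirds by (intro mult_left_mono) auto
  then have "S - T * ln 2 \<le> - T / 8"
    using assms(2) by simp
  then show ?thesis
    by (simp add: powr_def exp_diff[symmetric] mult.commute)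
qed

lemma prob_level_overflow_le:
  assumes M0: "0 < M0" and D: "0 < D" "\<forall>s\<le>N. bins M0 s dvd D"
    and R: "0 \<le> R" "24 * R \<le> real M0" and s: "s < N"
  shows "measure_pmf.prob (hash_pmf N D)
      {H. threshold M0 R (Suc k) s \<le> real (card {x. x < s \<and> climbs M0 tb (threshold M0 R k) k x H})}
    \<le> exp (- R / 8)"
proof -
  define T where "T = threshold M0 R (Suc k) s"
  define p where "p x = (if x < s then (threshold M0 R k x / real (bins M0 x))^2 else 0)" for x
  have T: "R \<le> T"
    unfolding T_def threshold_def by auto
  have count: "{x. x < N \<and> x < s \<and> climbs M0 tb (threshold M0 R k) k x H} =
      {x. x < s \<and> climbs M0 tb (threshold M0 R k) k x H}" for H
    using s by auto
  have S: "(\<Sum>x<s. (threshold M0 R k x / real (bins M0 x))^2) \<le> 3 * T / 8"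
    unfolding T_def by (rule sum_square_threshold_le_threshold_Suc[OF M0 R])
  have "measure_pmf.prob (hash_pmf N D)
      {H. T \<le> real (card {x. x < N \<and> x < s \<and> climbs M0 tb (threshold M0 R k) k x H})}
    \<le> exp ((2 - 1) * (\<Sum>x<N. p x)) / 2 powr T"
    unfolding hash_pmf_def
  proof (rule prob_Pi_pmf_card_adapted_ge)
    show "(x < s \<and> climbs M0 tb (threshold M0 R k) k x H) = (x < s \<and> climbs M0 tb (threshold M0 R k) k x H')"
      if "\<And>y. y \<le> x \<Longrightarrow> H y = H' y" for x H H'
      using climbs_cong[OF that] by simp
    show "measure_pmf.prob (pmf_of_set ({..<D} \<times> {..<D}))
        {v. x < s \<and> climbs M0 tb (threshold M0 R k) k x (H(x := v))} \<le> p x"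
      if "x < N" for x H
      using prob_climbs_le[OF M0 D(1)] D(2) that by (simp add: p_def)
  qed simp
  also have "(\<Sum>x<N. p x) = (\<Sum>x<s. (threshold M0 R k x / real (bins M0 x))^2)"
    unfolding p_def using s by (intro sum.mono_neutral_cong_right) auto
  also have "exp ((2 - 1) * (\<Sum>x<s. (threshold M0 R k x / real (bins M0 x))^2)) / 2 powr T
      \<le> exp (- T / 8)"
    using R T S by (intro exp_div_two_powr_le) auto
  also have "\<dots> \<le> exp (- R / 8)"
    using T by simp
  finally show ?thesis
    by (simp only: count T_def)
qed

lemma prob_card_climbs_ge_le:
  assumes M0: "0 < M0" and D: "0 < D" "\<forall>s\<le>N. bins M0 s dvd D" and R: "0 \<le> R"
    and q: "real N * (beta k)^2 + 3 * R^2 / real M0 \<le> q" "0 < q" "q \<le> 1"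
  shows "measure_pmf.prob (hash_pmf N D)
      {H. real r \<le> real (card {x. x < N \<and> climbs M0 tb (threshold M0 R k) k x H})}
    \<le> exp 1 * q ^ r"
proof -
  define p where "p x = (threshold M0 R k x / real (bins M0 x))^2" for x
  have "(\<Sum>x<N. p x) \<le> q"
    unfolding p_def using sum_square_threshold_le[OF M0 R] q(1) by (rule order_trans)
  then have "(1 / q - 1) * (\<Sum>x<N. p x) \<le> (1 / q - 1) * q"
    using q by (intro mult_left_mono) (auto simp: field_simps)
  also have "\<dots> \<le> 1"
    using q by (simp add: field_simps)
  finally have moment: "(1 / q - 1) * (\<Sum>x<N. p x) \<le> 1" .
  have "measure_pmf.prob (hash_pmf N D)
      {H. real r \<le> real (card {x. x < N \<and> climbs M0 tb (threshold M0 R k) k x H})}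
    \<le> exp ((1 / q - 1) * (\<Sum>x<N. p x)) / (1 / q) powr real r"
    unfolding hash_pmf_def
  proof (rule prob_Pi_pmf_card_adapted_ge)
    show "climbs M0 tb (threshold M0 R k) k x H = climbs M0 tb (threshold M0 R k) k x H'"
      if "\<And>y. y \<le> x \<Longrightarrow> H y = H' y" for x H H'
      using climbs_cong[OF that] .
    show "measure_pmf.prob (pmf_of_set ({..<D} \<times> {..<D}))
        {v. climbs M0 tb (threshold M0 R k) k x (H(x := v))} \<le> p x"
      if "x < N" for x H
      using prob_climbs_le[OF M0 D(1)] D(2) that by (simp add: p_def)
  qed (use q in simp)
  also have "\<dots> \<le> exp 1 / (1 / q) powr real r"
    using moment by (intro divide_right_mono) auto
  also have "\<dots> = exp 1 * q ^ r"
    using q by (simp add: powr_realpow power_one_over)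
  finally show ?thesis .
qed

lemma max_load_gt_subset:
  assumes M0: "0 < M0" and t: "t \<le> N"
  shows "{H. k0 + r < max_load M0 tb H t} \<subseteq>
    (\<Union>(k, s)\<in>{..<k0} \<times> {..<N}.
      {H. threshold M0 R (Suc k) s \<le> real (card {x. x < s \<and> climbs M0 tb (threshold M0 R k) k x H})})
    \<union> {H. real r \<le> real (card {x. x < N \<and> climbs M0 tb (threshold M0 R k0) k0 x H})}"
    (is "_ \<subseteq> ?rhs")
proof (rule subsetI, rule ccontr)
  fix H assume "H \<in> {H. k0 + r < max_load M0 tb H t}" and H: "H \<notin> ?rhs"
  then have K: "k0 + r < max_load M0 tb H t"
    by simp
  have no_overflow:
    "real (card {x. x < s \<and> climbs M0 tb (threshold M0 R k) k x H}) < threshold M0 R (Suc k) s"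
    if "k < k0" "s < N" for k s
    using H that by (auto simp: not_le)
  have few: "real (card {x. x < N \<and> climbs M0 tb (threshold M0 R k0) k0 x H}) < real r"
    using H by auto
  have level_k0: "real (num_height_ge M0 tb H k0 x) \<le> threshold M0 R k0 x" if "x < N" for x
    using num_height_ge_le_threshold[where k0 = k0 and N = N, OF M0 no_overflow] that by simp
  obtain y where "y < t" "k0 + r \<le> ball_height M0 tb H y"
    using max_load_witness[OF M0 K] by auto
  then have "r \<le> num_height_ge M0 tb H (Suc k0) t"
    by (rule le_num_height_ge_if_ball_height)
  also have "\<dots> \<le> card {x. x < N \<and> climbs M0 tb (threshold M0 R k0) k0 x H}"
    unfolding num_height_ge_def[of M0 tb H "Suc k0"] climbs_def using level_k0 t
    by (intro card_mono) auto
  finally show False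
    using few by simp
qed

lemma prob_max_load_gt_le:
  assumes M0: "0 < M0" and D: "0 < D" "\<forall>s\<le>N. bins M0 s dvd D" and t: "t \<le> N"
    and R: "0 \<le> R" "24 * R \<le> real M0"
    and q: "real N * (beta k0)^2 + 3 * R^2 / real M0 \<le> q" "0 < q" "q \<le> 1"
  shows "measure_pmf.prob (hash_pmf N D) {H. k0 + r < max_load M0 tb H t}
    \<le> real k0 * real N * exp (- R / 8) + exp 1 * q ^ r"
proof -
  let ?P = "measure_pmf.prob (hash_pmf N D)"
  let ?overflow = "\<lambda>(k, s). {H. threshold M0 R (Suc k) s \<le>
      real (card {x. x < s \<and> climbs M0 tb (threshold M0 R k) k x H})}"
  let ?many = "{H. real r \<le> real (card {x. x < N \<and> climbs M0 tb (threshold M0 R k0) k0 x H})}"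
  have "?P {H. k0 + r < max_load M0 tb H t} \<le> ?P ((\<Union>ks\<in>{..<k0} \<times> {..<N}. ?overflow ks) \<union> ?many)"
    using max_load_gt_subset[OF M0 t, of k0 r tb R]
    by (intro measure_pmf.finite_measure_mono) (auto simp: case_prod_beta)
  also have "\<dots> \<le> (\<Sum>ks\<in>{..<k0} \<times> {..<N}. ?P (?overflow ks)) + ?P ?many"
    by (intro order_trans[OF measure_Un_le] add_right_mono
        measure_pmf.finite_measure_subadditive_finite) auto
  also have "\<dots> \<le> (\<Sum>ks\<in>{..<k0} \<times> {..<N}. exp (- R / 8)) + exp 1 * q ^ r"
    using prob_level_overflow_le[OF M0 D R] prob_card_climbs_ge_le[OF M0 D R(1) q]
    by (intro add_mono sum_mono) auto
  finally show ?thesis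
    by simp
qed

section \<open>Choice of the parameters\<close>

lemma beta_ceiling_log_le:
  assumes "0 < ln (real N)"
  shows "beta (nat \<lceil>log 2 (ln (real N))\<rceil>) \<le> 1 / real N"
proof -
  define k where "k = nat \<lceil>log 2 (ln (real N))\<rceil>"
  have N: "0 < real N"
    using assms by (cases "N = 0") auto
  have "ln (real N) = 2 powr log 2 (ln (real N))"
    using assms by simp
  also have "\<dots> \<le> 2 powr real k"
    unfolding k_def by (intro powr_mono) linarith+
  finally have ln_le: "ln (real N) \<le> 2 ^ k"
    by (simp add: powr_realpow)
  have "beta k \<le> exp (- 1) ^ (2 ^ k)"
    unfolding beta_def using exp_le by (intro power_mono) (auto simp: exp_minus field_simps)
  also have "\<dots> = exp (- (2 ^ k))"
    by (simp flip: exp_of_nat_mult)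
  also have "\<dots> \<le> exp (- ln (real N))"
    using ln_le by simp
  also have "\<dots> = 1 / real N"
    using N by (simp add: exp_minus inverse_eq_divide)
  finally show ?thesis
    unfolding k_def .
qed

lemma ceiling_log_add_le:
  fixes L :: real
  assumes "1 \<le> L" "real r + 1 \<le> ln L"
  shows "real (nat \<lceil>log 2 L\<rceil> + r) \<le> 3 * ln L"
proof -
  have "real (nat \<lceil>log 2 L\<rceil>) \<le> ln L / ln 2 + 1"
    using assms(1) by (simp add: log_def)
  also have "\<dots> \<le> ln L / (2 / 3) + 1"
    using assms(1) ln2_ge_two_thirds by (intro add_right_mono divide_left_mono) auto
  finally show ?thesis
    using assms(2) by simp
qed

lemma inverse_add_le_powr:
  fixes N M R e \<nu> :: real
  assumes N: "16 \<le> N" and \<nu>: "0 < \<nu>" "\<nu> \<le> 1 / 2"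
    and M: "N powr e \<le> M" and R: "6 * R^2 \<le> N powr (e - \<nu>)"
  shows "1 / N + 3 * R^2 / M \<le> N powr (- \<nu>)"
proof -
  have pos: "0 < N powr e"
    using N by simp
  then have "3 * R^2 / M \<le> 3 * R^2 / N powr e"
    using M by (intro divide_left_mono mult_pos_pos) (auto intro: less_le_trans[OF pos M])
  also have "\<dots> \<le> N powr (- \<nu>) / 2"
    using R N by (simp add: powr_diff field_simps powr_minus)
  finally have R_part: "3 * R^2 / M \<le> N powr (- \<nu>) / 2" .
  have "4 = 16 powr (1 / 2 :: real)"
    by (simp add: powr_half_sqrt)
  also have "\<dots> \<le> N powr (1 / 2)"
    using N by (intro powr_mono2) auto
  also have "\<dots> \<le> N powr (1 - \<nu>)"
    using N \<nu> by (intro powr_mono) auto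
  finally have "1 / N \<le> N powr (- \<nu>) / 2"
    using N by (simp add: powr_diff powr_minus field_simps)
  with R_part show ?thesis
    by simp
qed

lemma climb_mass_le_powr:
  fixes N :: nat
  assumes N: "16 \<le> N" and \<nu>: "0 < \<nu>" "\<nu> \<le> 1 / 2"
    and M0: "real N powr e \<le> real M0" and R: "6 * R^2 \<le> real N powr (e - \<nu>)"
  shows "real N * (beta (nat \<lceil>log 2 (ln (real N))\<rceil>))^2 + 3 * R^2 / real M0 \<le> real N powr (- \<nu>)"
proof -
  have "0 < ln (real N)"
    using N by simp
  then have "real N * (beta (nat \<lceil>log 2 (ln (real N))\<rceil>))^2 \<le> real N * (1 / real N)^2"
    using beta_ceiling_log_le[of N] beta_nonneg by (intro mult_left_mono power_mono) auto
  then show ?thesis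
    using inverse_add_le_powr[OF _ \<nu> M0 R] N by (simp add: power2_eq_square)
qed

lemma tail_terms_le:
  fixes N q \<nu> c :: real
  assumes N: "4 \<le> N" and k: "real k \<le> N" and q: "0 \<le> q" "q \<le> N powr (- \<nu>)"
    and r: "c + 1 \<le> real r * \<nu>"
  shows "real k * N * N powr (- (c + 3)) + exp 1 * q ^ r \<le> 1 / N powr c"
proof -
  have "real k * N * N powr (- (c + 3)) \<le> N powr 1 * N powr 1 * N powr (- (c + 3))"
    using N k by (intro mult_right_mono) auto
  also have "\<dots> = N powr (1 + 1 + - (c + 3))"
    by (simp only: powr_add)
  also have "\<dots> = N powr (- (c + 1))"
    by (simp add: algebra_simps)
  finally have first: "real k * N * N powr (- (c + 3)) \<le> N powr (- (c + 1))" .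
  have "q ^ r \<le> (N powr (- \<nu>)) ^ r"
    using q by (intro power_mono)
  also have "\<dots> = N powr (- (real r * \<nu>))"
    using N by (simp add: powr_realpow[symmetric] powr_powr mult.commute)
  also have "\<dots> \<le> N powr (- (c + 1))"
    using N r by (intro powr_mono) auto
  finally have "exp 1 * q ^ r \<le> 3 * N powr (- (c + 1))"
    using exp_le q(1) by (intro mult_mono) auto
  moreover have "4 * N powr (- (c + 1)) \<le> 1 / N powr c"
  proof -
    have "4 * N powr (- (c + 1)) = (4 / N) * N powr (- c)"
      using N by (simp add: powr_diff powr_minus divide_inverse)
    also have "\<dots> \<le> N powr (- c)"
      using N by (intro mult_left_le_one_le) auto
    finally show ?thesis
      by (simp add: powr_minus divide_inverse)
  qed
  ultimately show ?thesis
    using first by linarith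
qed

text \<open>With this \<open>R\<close> each of the \<open>k0 * N\<close> overflow events has probability \<open>N powr -(c+3)\<close>.
  Since \<open>M0 \<ge> N powr (1/a)\<close>, the expected number of balls climbing above level \<open>k0\<close> is at
  most \<open>q = N powr -\<nu>\<close>, and the \<open>r\<close> climbs behind a load above \<open>k0 + r\<close> cost
  \<open>exp 1 * q ^ r \<le> 3 * N powr -(c+1)\<close>.\<close>

lemma max_load_tail_bound:
  fixes a c :: real and N :: nat
  defines "R \<equiv> 8 * (c + 3) * ln (real N)" and "\<nu> \<equiv> 1 / (2 * a + 2)"
    and "r \<equiv> nat \<lceil>(c + 1) * (2 * a + 2)\<rceil>"
  assumes a: "0 < a" and c: "0 < c" and N: "16 \<le> N"
    and R_small: "24 * R \<le> real N powr (1 / a)" "6 * R^2 \<le> real N powr (1 / a - \<nu>)"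
    and k_small: "log 2 (ln (real N)) + 1 \<le> real N"
    and r_small: "real r + 1 \<le> ln (ln (real N))"
    and M0: "0 < M0" "real N \<le> real M0 powr a"
    and D: "0 < D" "\<forall>s\<le>N. bins M0 s dvd D" and t: "t \<le> N"
  shows "measure_pmf.prob (hash_pmf N D) {H. real (max_load M0 tb H t) > 3 * ln (ln (real N))}
    \<le> 1 / real N powr c"
proof -
  define k0 where "k0 = nat \<lceil>log 2 (ln (real N))\<rceil>"
  define q where "q = real N powr (- \<nu>)"
  have ln_N: "1 \<le> ln (real N)"
    using N exp_le by (simp add: ln_ge_iff)
  have N_le_M0: "real N powr (1 / a) \<le> real M0"
    using powr_mono2[OF _ _ M0(2), of "1 / a"] a M0(1) by (simp add: powr_powr)
  have \<nu>: "0 < \<nu>" "\<nu> \<le> 1 / 2"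
    unfolding \<nu>_def using a by (auto simp: field_simps)
  have q_bound: "real N * (beta k0)^2 + 3 * R^2 / real M0 \<le> q"
    unfolding k0_def q_def using N \<nu> N_le_M0 R_small(2) by (rule climb_mass_le_powr)
  have "q \<le> real N powr 0"
    unfolding q_def using N \<nu> by (intro powr_mono) auto
  then have q: "0 < q" "q \<le> 1"
    unfolding q_def using N by simp_all
  have "real (k0 + r) \<le> 3 * ln (ln (real N))"
    unfolding k0_def using ceiling_log_add_le[OF ln_N r_small] .
  then have "{H. real (max_load M0 tb H t) > 3 * ln (ln (real N))} \<subseteq> {H. k0 + r < max_load M0 tb H t}"
    by auto
  then have "measure_pmf.prob (hash_pmf N D) {H. real (max_load M0 tb H t) > 3 * ln (ln (real N))}
      \<le> measure_pmf.prob (hash_pmf N D) {H. k0 + r < max_load M0 tb H t}"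
    by (rule measure_pmf.finite_measure_mono) simp
  also have "\<dots> \<le> real k0 * real N * exp (- R / 8) + exp 1 * q ^ r"
    using R_small(1) N_le_M0 ln_N c
    by (intro prob_max_load_gt_le[OF M0(1) D t _ _ q_bound q]) (auto simp: R_def)
  also have "exp (- R / 8) = real N powr (- (c + 3))"
  proof -
    have "- R / 8 = - (c + 3) * ln (real N)"
      unfolding R_def by linarith
    then show ?thesis
      using N by (simp only: powr_def) simp
  qed
  also have "real k0 * real N * real N powr (- (c + 3)) + exp 1 * q ^ r \<le> 1 / real N powr c"
  proof (rule tail_terms_le)
    show "real k0 \<le> real N"
      unfolding k0_def using k_small ln_N by linarith
    show "c + 1 \<le> real r * \<nu>"
      unfolding r_def \<nu>_def using a by (simp add: field_simps) linarith
  qed (use N q_def in auto)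
  finally show ?thesis .
qed

theorem lemma4p1:
  fixes a c :: real
  assumes "a > 0" and "c > 0"
  shows "\<exists>C N0. \<forall>M0 N D t tb.
    0 < M0 \<and> N0 \<le> N \<and> real N \<le> real M0 powr a \<and>
    0 < D \<and> (\<forall>s\<le>N. bins M0 s dvd D) \<and> t \<le> N \<longrightarrow>
    measure_pmf.prob (hash_pmf N D)
      {H. real (max_load M0 tb H t) > C * ln (ln (real N))} \<le> 1 / real N powr c"
proof -
  define \<nu> where "\<nu> = 1 / (2 * a + 2)"
  define r where "r = nat \<lceil>(c + 1) * (2 * a + 2)\<rceil>"
  have "1 / (2 * a + 2) < 1 / a"
    using assms by (intro divide_strict_left_mono) auto
  then have "1 / a - \<nu> > 0"
    unfolding \<nu>_def by simp
  then have "eventually (\<lambda>N::nat. 16 \<le> N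
      \<and> 24 * (8 * (c + 3) * ln (real N)) \<le> real N powr (1 / a)
      \<and> 6 * (8 * (c + 3) * ln (real N))^2 \<le> real N powr (1 / a - \<nu>)
      \<and> log 2 (ln (real N)) + 1 \<le> real N
      \<and> real r + 1 \<le> ln (ln (real N))) sequentially" (is "eventually ?large _")
    using assms by (intro eventually_conj eventually_ge_at_top; real_asymp)
  then obtain N0 where "\<And>N. N0 \<le> N \<Longrightarrow> ?large N"
    unfolding eventually_sequentially by blast
  then show ?thesis
    using max_load_tail_bound[OF assms] unfolding \<nu>_def r_def by blast
qed

end
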